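(* Let $\mathbf{M}$ be the $5\times4$ matrix of operators on $\ell_{2+}$ $$\mathbf{M}=\begin{bmatrix}-\mathbf{1}&\mathbf{0}&\mathbf{0}&\mathbf{0}\\ \tfrac{1}{\sqrt2}\mathfrak{q}^*&-\mathbf{1}&\mathbf{0}&\mathbf{0}\\ \mathbf{0}&\tfrac{1}{\sqrt2}\mathfrak{q}^*&\tfrac{1}{\sqrt2}\mathfrak{q}^*&\mathbf{0}\\ \mathbf{0}&\mathbf{0}&-\mathbf{1}&\tfrac{1}{\sqrt2}\mathfrak{q}^*\\ \mathbf{0}&\mathbf{0}&\mathbf{0}&-\mathbf{1}\end{bmatrix},$$ and let $\mathbf{P}$ be any $4\times4$ permutation matrix. Then there does not exist an invertible $4\times4$ matrix of operators $\mathbf{L}$ with entries in $\mathbb{R}[\mathfrak{q}]$ such that both of the following hold: 1) $\mathbf{L}\mathbf{L}^*=(\mathbf{M}\mathbf{P})^*\mathbf{M}\mathbf{P}$; 2) $\mathbf{L}$ is lower triangular and satisfies $[(\mathbf{M}\mathbf{P})^*\mathbf{M}\mathbf{P}]_{ij}=\mathbf{0}\implies\mathbf{L}_{ij}=\mathbf{0}$ for all $i,j$.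
   Context: $\ell_{2+}$ is the Hilbert space of square-summable real sequences $(y[0],y[1],\ldots)$; matrices of operators act on $\ell_{2+}^n$ in the usual way and $^*$ denotes the adjoint. The forward shift is $\mathfrak{q}:(y[0],y[1],\ldots)\mapsto(y[1],y[2],\ldots)$, with adjoint $\mathfrak{q}^*:(y[0],y[1],\ldots)\mapsto(0,y[0],y[1],\ldots)$. $\mathbf{1}$ is the identity and $\mathbf{0}$ the zero operator; real scalars act by scaling. $\mathbb{R}[\mathfrak{q}]=\{\sum_{j=0}^{N-1}\alpha_j\mathfrak{q}^j : N\in\mathbb{N},\ \alpha_j\in\mathbb{R}\}$ (the operators whose adjoints are polynomials in $\mathfrak{q}^*$). A permutation matrix of operators has exactly one nonzero entry in each row and column, and that entry equals $\mathbf{1}$. *)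

theory Defs
  imports Complex_Main
begin

type_synonym seq = "nat \<Rightarrow> real"
type_synonym op = "seq \<Rightarrow> seq"
type_synonym opmat = "nat \<Rightarrow> nat \<Rightarrow> op"

definition ell2 :: "seq set" where
  "ell2 = {y. summable (\<lambda>n. (y n)\<^sup>2)}"

definition ell2_inner :: "seq \<Rightarrow> seq \<Rightarrow> real" where
  "ell2_inner x y = (\<Sum>n. x n * y n)"

definition fshift :: op where
  "fshift y = (\<lambda>n. y (Suc n))"

definition bshift :: op where
  "bshift y = (\<lambda>n. case n of 0 \<Rightarrow> 0 | Suc m \<Rightarrow> y m)"

definition op_zero :: op where "op_zero y = (\<lambda>n. 0)"
definition op_one :: op where "op_one y = y"
definition op_negone :: op where "op_negone y = (\<lambda>n. - y n)"
definition op_scale :: "real \<Rightarrow> op \<Rightarrow> op" where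
  "op_scale c T y = (\<lambda>n. c * T y n)"

definition op_eq :: "op \<Rightarrow> op \<Rightarrow> bool" where
  "op_eq T S \<longleftrightarrow> (\<forall>y\<in>ell2. T y = S y)"

definition bounded_op :: "op \<Rightarrow> bool" where
  "bounded_op T \<longleftrightarrow> (\<forall>x\<in>ell2. T x \<in> ell2)
     \<and> (\<forall>x\<in>ell2. \<forall>y\<in>ell2. \<forall>a b. T (\<lambda>n. a * x n + b * y n) = (\<lambda>n. a * T x n + b * T y n))
     \<and> (\<exists>C. \<forall>x\<in>ell2. ell2_inner (T x) (T x) \<le> C * ell2_inner x x)"

definition adj :: "op \<Rightarrow> op" where
  "adj T = (THE S. (\<forall>y. y \<notin> ell2 \<longrightarrow> S y = (\<lambda>n. 0)) \<and> (\<forall>y\<in>ell2. S y \<in> ell2)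
      \<and> (\<forall>x\<in>ell2. \<forall>y\<in>ell2. ell2_inner (T x) y = ell2_inner x (S y)))"

definition mmul :: "nat \<Rightarrow> opmat \<Rightarrow> opmat \<Rightarrow> opmat" where
  "mmul k A B i j = (\<lambda>y n. \<Sum>l<k. A i l (B l j y) n)"

definition madj :: "opmat \<Rightarrow> opmat" where
  "madj A i j = adj (A j i)"

definition mat_eq :: "nat \<Rightarrow> nat \<Rightarrow> opmat \<Rightarrow> opmat \<Rightarrow> bool" where
  "mat_eq m n A B \<longleftrightarrow> (\<forall>i<m. \<forall>j<n. op_eq (A i j) (B i j))"

definition mat_id :: opmat where
  "mat_id i j = (if i = j then op_one else op_zero)"

definition invertible_opmat :: "nat \<Rightarrow> opmat \<Rightarrow> bool" where
  "invertible_opmat n L \<longleftrightarrow> (\<exists>K. (\<forall>i<n. \<forall>j<n. bounded_op (K i j))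
      \<and> mat_eq n n (mmul n L K) mat_id \<and> mat_eq n n (mmul n K L) mat_id)"

definition in_Rq :: "op \<Rightarrow> bool" where
  "in_Rq T \<longleftrightarrow> (\<exists>N a. T = (\<lambda>y n. \<Sum>k<N. a k * (fshift ^^ k) y n))"

definition perm_opmat :: "nat \<Rightarrow> opmat \<Rightarrow> bool" where
  "perm_opmat n P \<longleftrightarrow> (\<forall>i<n. \<forall>j<n. P i j = op_one \<or> P i j = op_zero)
     \<and> (\<forall>i<n. \<exists>!j. j < n \<and> P i j \<noteq> op_zero)
     \<and> (\<forall>j<n. \<exists>!i. i < n \<and> P i j \<noteq> op_zero)"

definition lower_tri :: "nat \<Rightarrow> opmat \<Rightarrow> bool" where
  "lower_tri n L \<longleftrightarrow> (\<forall>i<n. \<forall>j<n. i < j \<longrightarrow> op_eq (L i j) op_zero)"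

definition cq :: op where "cq = op_scale (1 / sqrt 2) bshift"

text \<open>The 5x4 matrix M (rows/columns indexed from 0).\<close>
definition Mmat :: opmat where
  "Mmat i j =
    [[op_negone, op_zero,   op_zero,   op_zero],
     [cq,        op_negone, op_zero,   op_zero],
     [op_zero,   cq,        cq,        op_zero],
     [op_zero,   op_zero,   op_negone, cq],
     [op_zero,   op_zero,   op_zero,   op_negone]] ! i ! j"

end

theory Submission
  imports Defs
begin

(*
  Let G = (M P)\<^sup>* (M P); its entries are those of M\<^sup>* M with rows and columns permuted by P.
  Since the first row of a lower triangular L is (L00, 0, 0, 0), the first column of L L\<^sup>* = G
  reads L_i0 L00\<^sup>* = G_i0, and invertibility of L forces L00 to have a nonzero constant term.
  For polynomials A, B in q, applying A B\<^sup>* to the unit vector at the top degree t of A and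
  reading off position s, the lowest degree of B, gives a_t b_s. Hence A B\<^sup>* = 0 only if
  A = 0 or B = 0, and if b_0 \<noteq> 0, every output of A B\<^sup>* vanishes at 0 only if A = 0.
  Now distinguish the column of M\<^sup>* M that P moves to the front. For the first or last column,
  the first column of G contains a nonzero multiple of q\<^sup>*, whose outputs vanish at 0:
  impossible. For the two middle ones, there are rows u, w with G_u0, G_w0 \<noteq> 0 and G_uw = 0,
  and the sparsity condition makes rows u and w of L disjointly supported outside column 0;
  then L_u0 L_w0\<^sup>* = 0, so one of G_u0, G_w0 vanishes.
*)

subsection \<open>The space \<open>ell2\<close> and the shifts\<close>

definition unit_seq :: "nat \<Rightarrow> seq" where
  "unit_seq m = (\<lambda>n. if n = m then 1 else 0)"

lemma fshift_pow_apply: "(fshift ^^ k) y n = y (n + k)"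
  by (induction k arbitrary: n) (auto simp: fshift_def)

lemma bshift_pow_apply: "(bshift ^^ k) y n = (if k \<le> n then y (n - k) else 0)"
  by (induction k arbitrary: n) (auto simp: bshift_def split: nat.split)

lemma ell2_summable_mult:
  assumes "u \<in> ell2" "v \<in> ell2"
  shows "summable (\<lambda>n. u n * v n)"
proof (rule summable_comparison_test')
  show "summable (\<lambda>n. (u n)\<^sup>2 + (v n)\<^sup>2)"
    using assms by (intro summable_add) (auto simp: ell2_def)
  fix n
  have "2 * \<bar>u n\<bar> * \<bar>v n\<bar> \<le> \<bar>u n\<bar>\<^sup>2 + \<bar>v n\<bar>\<^sup>2"
    by (rule sum_squares_bound)
  moreover have "0 \<le> \<bar>u n\<bar> * \<bar>v n\<bar>"
    by simp
  ultimately show "norm (u n * v n) \<le> (u n)\<^sup>2 + (v n)\<^sup>2"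
    unfolding real_norm_def abs_mult power2_abs by linarith
qed

lemma ell2_add_scaled:
  assumes "u \<in> ell2" "v \<in> ell2"
  shows "(\<lambda>n. u n + c * v n) \<in> ell2"
proof -
  have "summable (\<lambda>n. (u n + c * v n)\<^sup>2)"
  proof (rule summable_comparison_test')
    show "summable (\<lambda>n. 2 * (u n)\<^sup>2 + 2 * c\<^sup>2 * (v n)\<^sup>2)"
      using assms by (intro summable_add summable_mult) (auto simp: ell2_def)
    fix n
    have "0 \<le> (u n - c * v n)\<^sup>2"
      by simp
    then have "(u n + c * v n)\<^sup>2 \<le> 2 * (u n)\<^sup>2 + 2 * c\<^sup>2 * (v n)\<^sup>2"
      by (simp add: power2_eq_square algebra_simps)
    then show "norm ((u n + c * v n)\<^sup>2) \<le> 2 * (u n)\<^sup>2 + 2 * c\<^sup>2 * (v n)\<^sup>2"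
      by simp
  qed
  then show ?thesis
    by (simp add: ell2_def)
qed

lemma ell2_zero [simp]: "(\<lambda>n. 0) \<in> ell2"
  by (simp add: ell2_def)

lemma ell2_scaled: "u \<in> ell2 \<Longrightarrow> (\<lambda>n. c * u n) \<in> ell2"
  using ell2_add_scaled[of "\<lambda>n. 0" u c] by simp

lemma ell2_unit_seq [simp]: "unit_seq m \<in> ell2"
proof -
  have "(\<lambda>n. (unit_seq m n)\<^sup>2) = (\<lambda>n. if n = m then 1 else 0)"
    by (auto simp: unit_seq_def)
  then show ?thesis
    using summable_single[of m "\<lambda>_. 1::real"] by (simp add: ell2_def)
qed

lemma ell2_fshift_pow: "y \<in> ell2 \<Longrightarrow> (fshift ^^ k) y \<in> ell2"
  by (simp add: ell2_def fshift_pow_apply summable_iff_shift[of "\<lambda>m. (y m)\<^sup>2" k])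

lemma ell2_bshift_pow: "y \<in> ell2 \<Longrightarrow> (bshift ^^ k) y \<in> ell2"
proof -
  assume "y \<in> ell2"
  then have "summable (\<lambda>n. ((bshift ^^ k) y (n + k))\<^sup>2)"
    by (simp add: ell2_def bshift_pow_apply)
  then show ?thesis
    unfolding ell2_def by (subst (asm) summable_iff_shift) simp
qed

lemma ell2_inner_commute: "ell2_inner x y = ell2_inner y x"
  by (simp add: ell2_inner_def mult.commute)

lemma ell2_inner_add_scaled_left:
  assumes "u \<in> ell2" "v \<in> ell2" "y \<in> ell2"
  shows "ell2_inner (\<lambda>n. u n + c * v n) y = ell2_inner u y + c * ell2_inner v y"
proof -
  have "summable (\<lambda>n. u n * y n)" "summable (\<lambda>n. v n * y n)"
    using assms ell2_summable_mult by auto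
  moreover have "(\<lambda>n. (u n + c * v n) * y n) = (\<lambda>n. u n * y n + c * (v n * y n))"
    by (simp add: algebra_simps)
  ultimately show ?thesis
    by (simp add: ell2_inner_def suminf_add[symmetric] summable_mult suminf_mult)
qed

lemma ell2_inner_add_scaled_right:
  assumes "u \<in> ell2" "v \<in> ell2" "y \<in> ell2"
  shows "ell2_inner y (\<lambda>n. u n + c * v n) = ell2_inner y u + c * ell2_inner y v"
  using ell2_inner_add_scaled_left[OF assms] by (simp add: ell2_inner_commute)

lemma ell2_inner_unit_seq: "ell2_inner (unit_seq m) z = z m"
proof -
  have "(\<lambda>n. unit_seq m n * z n) = (\<lambda>n. if n = m then z n else 0)"
    by (auto simp: unit_seq_def)
  then show ?thesis
    unfolding ell2_inner_def using sums_single[of m z] sums_unique by metis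
qed

lemma ell2_inner_fshift:
  assumes "x \<in> ell2" "y \<in> ell2"
  shows "ell2_inner (fshift x) y = ell2_inner x (bshift y)"
proof -
  have "summable (\<lambda>n. x n * bshift y n)"
    using assms ell2_bshift_pow[of y 1] ell2_summable_mult by auto
  from suminf_split_head[OF this] show ?thesis
    by (simp add: ell2_inner_def fshift_def bshift_def)
qed

lemma ell2_inner_fshift_pow:
  assumes "x \<in> ell2" "y \<in> ell2"
  shows "ell2_inner ((fshift ^^ k) x) y = ell2_inner x ((bshift ^^ k) y)"
  using assms(2)
proof (induction k arbitrary: y)
  case (Suc k)
  have "ell2_inner ((fshift ^^ Suc k) x) y = ell2_inner ((fshift ^^ k) x) (bshift y)"
    using ell2_inner_fshift[OF ell2_fshift_pow[OF assms(1)] Suc.prems] by simp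
  also have "\<dots> = ell2_inner x ((bshift ^^ Suc k) y)"
    using Suc ell2_bshift_pow[of y 1] by (simp add: funpow_Suc_right del: funpow.simps)
  finally show ?case .
qed simp

lemma adj_unique:
  assumes "\<forall>y. y \<notin> ell2 \<longrightarrow> S y = (\<lambda>n. 0)" "\<forall>y\<in>ell2. S y \<in> ell2"
    and "\<forall>x\<in>ell2. \<forall>y\<in>ell2. ell2_inner (T x) y = ell2_inner x (S y)"
  shows "adj T = S"
  unfolding adj_def
proof (rule the_equality)
  fix S'
  assume S': "(\<forall>y. y \<notin> ell2 \<longrightarrow> S' y = (\<lambda>n. 0)) \<and> (\<forall>y\<in>ell2. S' y \<in> ell2)
      \<and> (\<forall>x\<in>ell2. \<forall>y\<in>ell2. ell2_inner (T x) y = ell2_inner x (S' y))"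
  have "S' y n = S y n" if "y \<in> ell2" for y n
  proof -
    have "ell2_inner (unit_seq n) (S' y) = ell2_inner (unit_seq n) (S y)"
      using S' assms that by (metis ell2_unit_seq)
    then show ?thesis
      by (simp add: ell2_inner_unit_seq)
  qed
  then show "S' = S"
    using S' assms by (metis ext)
qed (use assms in blast)

lemma adj_op_zero: "adj op_zero = (\<lambda>y n. 0)"
  by (rule adj_unique) (auto simp: op_zero_def ell2_inner_def)

subsection \<open>Polynomials in the shift\<close>

definition fshift_poly :: "(nat \<Rightarrow> real) \<Rightarrow> nat \<Rightarrow> op" where
  "fshift_poly a N = (\<lambda>y n. \<Sum>k<N. a k * (fshift ^^ k) y n)"

definition bshift_poly :: "(nat \<Rightarrow> real) \<Rightarrow> nat \<Rightarrow> op" where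
  "bshift_poly a N = (\<lambda>y n. \<Sum>k<N. a k * (bshift ^^ k) y n)"

lemma in_Rq_iff: "in_Rq T \<longleftrightarrow> (\<exists>a N. T = fshift_poly a N)"
  by (auto simp: in_Rq_def fshift_poly_def)

lemma fshift_poly_Suc:
  "fshift_poly a (Suc N) y = (\<lambda>n. fshift_poly a N y n + a N * (fshift ^^ N) y n)"
  by (simp add: fshift_poly_def)

lemma bshift_poly_Suc:
  "bshift_poly a (Suc N) y = (\<lambda>n. bshift_poly a N y n + a N * (bshift ^^ N) y n)"
  by (simp add: bshift_poly_def)

lemma ell2_fshift_poly: "y \<in> ell2 \<Longrightarrow> fshift_poly a N y \<in> ell2"
  by (induction N) (auto simp: fshift_poly_Suc ell2_add_scaled ell2_fshift_pow fshift_poly_def[of a 0])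

lemma ell2_bshift_poly: "y \<in> ell2 \<Longrightarrow> bshift_poly a N y \<in> ell2"
  by (induction N) (auto simp: bshift_poly_Suc ell2_add_scaled ell2_bshift_pow bshift_poly_def[of a 0])

lemma ell2_inner_fshift_poly:
  assumes "x \<in> ell2" "y \<in> ell2"
  shows "ell2_inner (fshift_poly a N x) y = ell2_inner x (bshift_poly a N y)"
proof (induction N)
  case 0
  then show ?case
    by (simp add: fshift_poly_def bshift_poly_def ell2_inner_def)
next
  case (Suc N)
  then show ?case
    using assms
    by (simp add: fshift_poly_Suc bshift_poly_Suc ell2_inner_add_scaled_left ell2_inner_add_scaled_right
        ell2_fshift_poly ell2_bshift_poly ell2_fshift_pow ell2_bshift_pow ell2_inner_fshift_pow)
qed

lemma adj_fshift_poly: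
  "adj (fshift_poly a N) = (\<lambda>y. if y \<in> ell2 then bshift_poly a N y else (\<lambda>n. 0))"
  by (rule adj_unique) (auto simp: ell2_inner_fshift_poly ell2_bshift_poly)

lemma adj_bshift_poly:
  "adj (bshift_poly a N) = (\<lambda>y. if y \<in> ell2 then fshift_poly a N y else (\<lambda>n. 0))"
  by (rule adj_unique) (auto simp: ell2_fshift_poly ell2_inner_commute[of "bshift_poly a N _"]
      ell2_inner_commute[of _ "fshift_poly a N _"] ell2_inner_fshift_poly)

lemma fshift_poly_unit_seq_0: "fshift_poly a N (unit_seq k) 0 = (if k < N then a k else 0)"
proof -
  have "fshift_poly a N (unit_seq k) 0 = (\<Sum>j<N. if j = k then a j else 0)"
    unfolding fshift_poly_def by (intro sum.cong) (auto simp: fshift_pow_apply unit_seq_def)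
  then show ?thesis
    by simp
qed

lemma fshift_poly_eq_zero_iff: "fshift_poly a N = op_zero \<longleftrightarrow> (\<forall>k<N. a k = 0)"
proof
  assume "fshift_poly a N = op_zero"
  then show "\<forall>k<N. a k = 0"
    using fshift_poly_unit_seq_0 by (metis op_zero_def)
qed (simp add: fshift_poly_def op_zero_def fun_eq_iff)

lemma in_Rq_op_eq_zero:
  assumes "in_Rq T" "op_eq T op_zero"
  shows "T = op_zero"
proof -
  obtain a N where T: "T = fshift_poly a N"
    using assms(1) in_Rq_iff by blast
  have "a k = 0" if "k < N" for k
    using assms(2) fshift_poly_unit_seq_0[of a N k] that
    by (simp add: T op_eq_def op_zero_def)
  then show ?thesis
    by (simp add: T fshift_poly_eq_zero_iff)
qed

lemma in_Rq_apply_zero: "in_Rq T \<Longrightarrow> T (\<lambda>n. 0) = (\<lambda>n. 0)"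
  by (auto simp: in_Rq_def fshift_pow_apply)

lemma in_Rq_apply_unit_seq_0:
  assumes "in_Rq T"
  shows "T (\<lambda>n. c * unit_seq 0 n) = (\<lambda>n. c * T (unit_seq 0) 0 * unit_seq 0 n)"
proof -
  obtain a N where T: "T = fshift_poly a N"
    using assms in_Rq_iff by blast
  show ?thesis
  proof
    fix n
    show "T (\<lambda>n. c * unit_seq 0 n) n = c * T (unit_seq 0) 0 * unit_seq 0 n"
      by (cases n) (auto simp: T fshift_poly_def fshift_pow_apply unit_seq_def sum_distrib_left mult_ac)
  qed
qed

lemma fshift_poly_bshift_poly_unit_seq:
  assumes "t < N" "\<forall>k<N. t < k \<longrightarrow> a k = 0" "s < M" "\<forall>l<s. b l = 0"
  shows "fshift_poly a N (bshift_poly b M (unit_seq t)) s = a t * b s"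
proof -
  have "fshift_poly a N (bshift_poly b M (unit_seq t)) s
      = (\<Sum>k<N. \<Sum>l<M. a k * b l * (if s + k = t + l then 1 else 0))"
    by (auto simp: fshift_poly_def bshift_poly_def fshift_pow_apply bshift_pow_apply unit_seq_def
        sum_distrib_left mult.assoc intro!: sum.cong)
  also have "\<dots> = (\<Sum>k<N. \<Sum>l<M. if k = t then if l = s then a k * b l else 0 else 0)"
  proof (intro sum.cong refl)
    fix k l
    assume "k \<in> {..<N}"
    then show "a k * b l * (if s + k = t + l then 1 else 0) = (if k = t then if l = s then a k * b l else 0 else 0)"
      using assms(2,4) by (cases "t < k"; cases "l < s") auto
  qed
  also have "\<dots> = a t * b s"
    using assms(1,3) by (simp add: if_distrib[symmetric] sum.If_cases)
  finally show ?thesis .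
qed

lemma fshift_poly_top_coeff:
  assumes "fshift_poly a N \<noteq> op_zero"
  obtains t where "t < N" "a t \<noteq> 0" "\<forall>k<N. t < k \<longrightarrow> a k = 0"
proof -
  define S where "S = {k. k < N \<and> a k \<noteq> 0}"
  have "finite S" "S \<noteq> {}"
    using assms by (auto simp: S_def fshift_poly_eq_zero_iff)
  then show ?thesis
    using Max_in[of S] Max_ge[of S] by (intro that[of "Max S"]) (auto simp: S_def not_le)
qed

lemma fshift_poly_bottom_coeff:
  assumes "fshift_poly a N \<noteq> op_zero"
  obtains s where "s < N" "a s \<noteq> 0" "\<forall>l<s. a l = 0"
proof -
  define S where "S = {k. k < N \<and> a k \<noteq> 0}"
  have S: "finite S" "S \<noteq> {}"
    using assms by (auto simp: S_def fshift_poly_eq_zero_iff)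
  show ?thesis
  proof (rule that[of "Min S"])
    show "Min S < N" "a (Min S) \<noteq> 0"
      using Min_in[OF S] by (auto simp: S_def)
    show "\<forall>l<Min S. a l = 0"
    proof (intro allI impI)
      fix l
      assume "l < Min S"
      have "l \<notin> S"
        using Min_le[OF S(1), of l] \<open>l < Min S\<close> by (meson not_le)
      moreover have "l < N"
        using Min_in[OF S] \<open>l < Min S\<close> by (simp add: S_def)
      ultimately show "a l = 0"
        by (simp add: S_def)
    qed
  qed
qed

lemma in_Rq_comp_adj_eq_zero:
  assumes "in_Rq A" "in_Rq B" "op_eq (A \<circ> adj B) op_zero"
  shows "A = op_zero \<or> B = op_zero"
proof (rule ccontr)
  obtain a N b M where A: "A = fshift_poly a N" and B: "B = fshift_poly b M"
    using assms(1,2) in_Rq_iff by metis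
  assume "\<not> (A = op_zero \<or> B = op_zero)"
  then obtain t s where t: "t < N" "a t \<noteq> 0" "\<forall>k<N. t < k \<longrightarrow> a k = 0"
    and s: "s < M" "b s \<noteq> 0" "\<forall>l<s. b l = 0"
    using fshift_poly_top_coeff fshift_poly_bottom_coeff A B by metis
  have "A (adj B (unit_seq t)) s = a t * b s"
    using t s by (simp add: A B adj_fshift_poly fshift_poly_bshift_poly_unit_seq)
  moreover have "A (adj B (unit_seq t)) s = 0"
    using assms(3) by (simp add: op_eq_def op_zero_def)
  ultimately show False
    using t s by simp
qed

lemma in_Rq_comp_adj_vanishing_at_0:
  assumes "in_Rq A" "in_Rq B" "B (unit_seq 0) 0 \<noteq> 0" "\<forall>y\<in>ell2. A (adj B y) 0 = 0"
  shows "A = op_zero"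
proof (rule ccontr)
  obtain a N b M where A: "A = fshift_poly a N" and B: "B = fshift_poly b M"
    using assms(1,2) in_Rq_iff by metis
  have b0: "0 < M" "b 0 \<noteq> 0"
    using assms(3) by (auto simp: B fshift_poly_unit_seq_0 split: if_splits)
  assume "A \<noteq> op_zero"
  then obtain t where t: "t < N" "a t \<noteq> 0" "\<forall>k<N. t < k \<longrightarrow> a k = 0"
    using fshift_poly_top_coeff A by metis
  have "A (adj B (unit_seq t)) 0 = a t * b 0"
    using t b0 by (simp add: A B adj_fshift_poly fshift_poly_bshift_poly_unit_seq)
  then show False
    using assms(4) t b0 by simp
qed

subsection \<open>Lower triangular factorizations\<close>

lemma lower_triangular_singular:
  fixes D :: "nat \<Rightarrow> nat \<Rightarrow> real"
  assumes "\<forall>i<n. \<forall>j<n. i < j \<longrightarrow> D i j = 0" "k < n" "D k k = 0"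
  shows "\<exists>w. (\<forall>i<n. (\<Sum>j<n. D i j * w j) = 0) \<and> (\<exists>j<n. w j \<noteq> 0)"
  using assms
proof (induction n)
  case (Suc m)
  show ?case
  proof (cases "D m m = 0")
    case True
    have "(\<Sum>j<Suc m. D i j * (if j = m then 1 else 0)) = 0" if "i < Suc m" for i
      using Suc.prems(1) that True by (cases "i = m") auto
    then show ?thesis
      by (intro exI[of _ "\<lambda>j. if j = m then 1 else 0"]) auto
  next
    case False
    then have "k < m"
      using Suc.prems(2,3) less_antisym by blast
    then obtain w where w: "\<forall>i<m. (\<Sum>j<m. D i j * w j) = 0" "\<exists>j<m. w j \<noteq> 0"
      using Suc by auto
    define w' where "w' = w(m := - (\<Sum>j<m. D m j * w j) / D m m)"
    have "(\<Sum>j<Suc m. D i j * w' j) = 0" if "i < Suc m" for i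
    proof (cases "i = m")
      case True
      then show ?thesis
        using False by (simp add: w'_def)
    next
      case False
      then show ?thesis
        using w(1) Suc.prems(1) that by (simp add: w'_def)
    qed
    moreover have "\<exists>j<Suc m. w' j \<noteq> 0"
      using w(2) by (auto simp: w'_def)
    ultimately show ?thesis
      by blast
  qed
qed simp

lemma bounded_op_scale:
  assumes "bounded_op T" "x \<in> ell2"
  shows "T (\<lambda>n. c * x n) = (\<lambda>n. c * T x n)"
proof -
  have "T (\<lambda>n. c * x n + 0 * x n) = (\<lambda>n. c * T x n + 0 * T x n)"
    using assms unfolding bounded_op_def by blast
  then show ?thesis
    by simp
qed

text \<open>On vectors \<open>w \<delta>\<^sub>0\<close>, a matrix over \<open>\<real>[q]\<close> acts as the real matrix of constant terms;
  a left inverse makes that real matrix injective, which a triangular matrix with a zero diagonal entry is not.\<close>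

lemma invertible_lower_tri_const_diag:
  assumes "invertible_opmat n L" "\<forall>i<n. \<forall>j<n. in_Rq (L i j)" "lower_tri n L" "k < n"
  shows "L k k (unit_seq 0) 0 \<noteq> 0"
proof
  obtain K where K: "\<forall>i<n. \<forall>j<n. bounded_op (K i j)" and KL: "mat_eq n n (mmul n K L) mat_id"
    using assms(1) unfolding invertible_opmat_def by blast
  define D where "D l j = L l j (unit_seq 0) 0" for l j
  have injective: "w i = 0" if w: "\<forall>l<n. (\<Sum>j<n. D l j * w j) = 0" and "i < n" for w i
  proof -
    have "mat_id i j (\<lambda>m. w j * unit_seq 0 m) 0 = (if i = j then w j else 0)" for j
      by (simp add: mat_id_def op_one_def op_zero_def unit_seq_def)
    then have "w i = (\<Sum>j<n. mat_id i j (\<lambda>m. w j * unit_seq 0 m) 0)"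
      using \<open>i < n\<close> by simp
    also have "\<dots> = (\<Sum>j<n. mmul n K L i j (\<lambda>m. w j * unit_seq 0 m) 0)"
      using KL \<open>i < n\<close> by (intro sum.cong refl) (simp add: mat_eq_def op_eq_def ell2_scaled)
    also have "\<dots> = (\<Sum>j<n. \<Sum>l<n. w j * D l j * K i l (unit_seq 0) 0)"
      unfolding mmul_def using assms(2) K \<open>i < n\<close>
      by (intro sum.cong refl) (simp add: in_Rq_apply_unit_seq_0 D_def bounded_op_scale)
    also have "\<dots> = (\<Sum>l<n. (\<Sum>j<n. D l j * w j) * K i l (unit_seq 0) 0)"
      by (subst sum.swap) (simp add: sum_distrib_left sum_distrib_right mult_ac)
    also have "\<dots> = 0"
      using w by simp
    finally show ?thesis .
  qed
  assume "L k k (unit_seq 0) 0 = 0"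
  moreover have "\<forall>i<n. \<forall>j<n. i < j \<longrightarrow> D i j = 0"
    using assms(3) by (simp add: lower_tri_def op_eq_def op_zero_def D_def)
  ultimately obtain w where "\<forall>l<n. (\<Sum>j<n. D l j * w j) = 0" "\<exists>j<n. w j \<noteq> 0"
    using lower_triangular_singular[of n D k] assms(4) by (auto simp: D_def)
  then show False
    using injective by blast
qed

lemma perm_opmat_columns:
  assumes "perm_opmat n P"
  obtains \<sigma> where "bij_betw \<sigma> {..<n} {..<n}"
    "\<forall>r<n. \<forall>j<n. P r j = (if r = \<sigma> j then op_one else op_zero)"
proof -
  have entries: "\<forall>i<n. \<forall>j<n. P i j = op_one \<or> P i j = op_zero"
    and rows: "\<forall>i<n. \<exists>!j. j < n \<and> P i j \<noteq> op_zero"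
    and cols: "\<forall>j<n. \<exists>!i. i < n \<and> P i j \<noteq> op_zero"
    using assms by (auto simp: perm_opmat_def)
  define \<sigma> where "\<sigma> j = (THE i. i < n \<and> P i j \<noteq> op_zero)" for j
  have \<sigma>: "\<sigma> j < n" "P (\<sigma> j) j \<noteq> op_zero" if "j < n" for j
    unfolding \<sigma>_def using theI'[OF cols[rule_format, OF that]] by blast+
  have \<sigma>_unique: "r = \<sigma> j" if "j < n" "r < n" "P r j \<noteq> op_zero" for r j
    using cols \<sigma> that by blast
  show ?thesis
  proof (rule that)
    show "\<forall>r<n. \<forall>j<n. P r j = (if r = \<sigma> j then op_one else op_zero)"
      using entries \<sigma> \<sigma>_unique by (smt (verit))
    have "inj_on \<sigma> {..<n}"
    proof (rule inj_onI)
      fix j j'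
      assume "j \<in> {..<n}" "j' \<in> {..<n}" "\<sigma> j = \<sigma> j'"
      then show "j = j'"
        using rows \<sigma> by (metis lessThan_iff)
    qed
    moreover have "\<sigma> ` {..<n} = {..<n}"
    proof
      show "{..<n} \<subseteq> \<sigma> ` {..<n}"
      proof
        fix r
        assume "r \<in> {..<n}"
        then obtain j where "j < n" "P r j \<noteq> op_zero"
          using rows by blast
        then show "r \<in> \<sigma> ` {..<n}"
          using \<sigma>_unique \<open>r \<in> {..<n}\<close> by blast
      qed
    qed (use \<sigma> in auto)
    ultimately show "bij_betw \<sigma> {..<n} {..<n}"
      by (simp add: bij_betw_def)
  qed
qed

lemma mmul_perm_right:
  assumes "\<forall>r<n. \<forall>j<n. P r j = (if r = \<sigma> j then op_one else op_zero)" "\<sigma> j < n" "j < n"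
    and "\<forall>r<n. A l r (\<lambda>k. 0) = (\<lambda>k. 0)"
  shows "mmul n A P l j = A l (\<sigma> j)"
proof (intro ext)
  fix y m
  have "mmul n A P l j y m = (\<Sum>r<n. if r = \<sigma> j then A l r y m else 0)"
    unfolding mmul_def using assms by (intro sum.cong refl) (auto simp: op_one_def op_zero_def)
  then show "mmul n A P l j y m = A l (\<sigma> j) y m"
    using assms(2) by simp
qed

lemma gram_mmul_perm_right:
  assumes "\<forall>r<n. \<forall>j<n. P r j = (if r = \<sigma> j then op_one else op_zero)" "bij_betw \<sigma> {..<n} {..<n}"
    and "\<forall>l<m. \<forall>r<n. A l r (\<lambda>k. 0) = (\<lambda>k. 0)" "i < n" "j < n"
  shows "mmul m (madj (mmul n A P)) (mmul n A P) i j = mmul m (madj A) A (\<sigma> i) (\<sigma> j)"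
proof -
  have "mmul n A P l k = A l (\<sigma> k)" if "l < m" "k < n" for l k
  proof -
    have "\<sigma> k < n"
      using bij_betw_apply[OF assms(2)] that(2) by simp
    then show ?thesis
      using mmul_perm_right[OF assms(1)] assms(3) that by simp
  qed
  then show ?thesis
    using assms(4,5) by (simp add: mmul_def madj_def)
qed

lemma mat_eq_mmul_madj_entry:
  assumes "mat_eq n n (mmul n L (madj L)) G" "\<forall>i<n. \<forall>j<n. in_Rq (L i j)" "i < n" "j < n"
    and "\<forall>l. 0 < l \<and> l < n \<longrightarrow> L i l = op_zero \<or> L j l = op_zero"
  shows "op_eq (L i 0 \<circ> adj (L j 0)) (G i j)"
  unfolding op_eq_def
proof
  fix y
  assume "y \<in> ell2"
  have "L i l (adj (L j l) y) m = 0" if "l \<in> {..<n} - {0}" for l m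
    using assms(2-5) that in_Rq_apply_zero by (fastforce simp: op_zero_def adj_op_zero)
  then have "(\<Sum>l<n. L i l (adj (L j l) y) m) = L i 0 (adj (L j 0) y) m" for m
    using assms(3) by (simp add: sum.remove[of "{..<n}" 0])
  moreover have "G i j y = (\<lambda>m. \<Sum>l<n. L i l (adj (L j l) y) m)"
    using assms(1,3,4) \<open>y \<in> ell2\<close> by (simp add: mat_eq_def op_eq_def mmul_def madj_def)
  ultimately show "(L i 0 \<circ> adj (L j 0)) y = G i j y"
    by simp
qed

lemma factor_first_column:
  assumes "mat_eq n n (mmul n L (madj L)) G" "\<forall>i<n. \<forall>j<n. in_Rq (L i j)" "lower_tri n L" "i < n"
  shows "op_eq (L i 0 \<circ> adj (L 0 0)) (G i 0)"
proof -
  have "L 0 l = op_zero" if "0 < l" "l < n" for l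
    using assms(2,3) that in_Rq_op_eq_zero by (simp add: lower_tri_def)
  then show ?thesis
    using mat_eq_mmul_madj_entry[OF assms(1,2,4)] assms(4) by simp
qed

lemma factor_first_column_vanishing_at_0:
  assumes "mat_eq n n (mmul n L (madj L)) G" "\<forall>i<n. \<forall>j<n. in_Rq (L i j)" "lower_tri n L"
    and "L 0 0 (unit_seq 0) 0 \<noteq> 0" "p < n" "\<forall>y\<in>ell2. G p 0 y 0 = 0"
  shows "op_eq (G p 0) op_zero"
proof -
  have col: "op_eq (L p 0 \<circ> adj (L 0 0)) (G p 0)"
    using factor_first_column[OF assms(1-3,5)] .
  have "in_Rq (L p 0)" "in_Rq (L 0 0)"
    using assms(2,5) by auto
  moreover have "\<forall>y\<in>ell2. L p 0 (adj (L 0 0) y) 0 = 0"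
    using col assms(6) by (simp add: op_eq_def)
  ultimately have "L p 0 = op_zero"
    using in_Rq_comp_adj_vanishing_at_0 assms(4) by blast
  then show ?thesis
    using col by (simp add: op_eq_def op_zero_def)
qed

lemma factor_first_column_orthogonal:
  assumes "mat_eq n n (mmul n L (madj L)) G" "\<forall>i<n. \<forall>j<n. in_Rq (L i j)" "lower_tri n L"
    and "\<forall>i<n. \<forall>j<n. op_eq (G i j) op_zero \<longrightarrow> op_eq (L i j) op_zero"
    and "u < n" "w < n" "op_eq (G u w) op_zero"
    and "\<forall>l. 0 < l \<and> l < n \<longrightarrow> op_eq (G u l) op_zero \<or> op_eq (G w l) op_zero"
  shows "op_eq (G u 0) op_zero \<or> op_eq (G w 0) op_zero"
proof -
  have "L u l = op_zero \<or> L w l = op_zero" if "0 < l" "l < n" for l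
    using assms(2,4-6,8) that in_Rq_op_eq_zero by meson
  then have "op_eq (L u 0 \<circ> adj (L w 0)) op_zero"
    using mat_eq_mmul_madj_entry[OF assms(1,2,5,6)] assms(7) by (simp add: op_eq_def)
  moreover have "in_Rq (L u 0)" "in_Rq (L w 0)"
    using assms(2,5,6) by auto
  ultimately have "L u 0 = op_zero \<or> L w 0 = op_zero"
    using in_Rq_comp_adj_eq_zero by blast
  moreover have "op_eq (G i 0) op_zero" if "i < n" "L i 0 = op_zero" for i
    using factor_first_column[OF assms(1-3) that(1)] that(2) by (simp add: op_eq_def op_zero_def)
  ultimately show ?thesis
    using assms(5,6) by blast
qed

subsection \<open>The Gram matrix of \<open>M\<close>\<close>

definition Mgram :: opmat where
  "Mgram i j =
    [[op_scale (3/2) op_one, op_scale (- 1 / sqrt 2) fshift, op_zero, op_zero],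
     [op_scale (- 1 / sqrt 2) bshift, op_scale (3/2) op_one, op_scale (1/2) op_one, op_zero],
     [op_zero, op_scale (1/2) op_one, op_scale (3/2) op_one, op_scale (- 1 / sqrt 2) bshift],
     [op_zero, op_zero, op_scale (- 1 / sqrt 2) fshift, op_scale (3/2) op_one]] ! i ! j"

lemma adj_op_negone: "y \<in> ell2 \<Longrightarrow> adj op_negone y = op_negone y"
proof -
  have "op_negone = fshift_poly (\<lambda>_. -1) 1" "bshift_poly (\<lambda>_. -1) 1 = op_negone"
    by (auto simp: op_negone_def fshift_poly_def bshift_poly_def fun_eq_iff)
  then show "y \<in> ell2 \<Longrightarrow> adj op_negone y = op_negone y"
    by (metis adj_fshift_poly)
qed

lemma adj_cq: "y \<in> ell2 \<Longrightarrow> adj cq y = op_scale (1 / sqrt 2) fshift y"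
proof -
  define c where "c k = (if k = 1 then 1 / sqrt 2 else (0::real))" for k :: nat
  have "cq = bshift_poly c 2" "fshift_poly c 2 = op_scale (1 / sqrt 2) fshift"
    by (auto simp: cq_def op_scale_def fshift_poly_def bshift_poly_def c_def fun_eq_iff numeral_2_eq_2)
  then show "y \<in> ell2 \<Longrightarrow> adj cq y = op_scale (1 / sqrt 2) fshift y"
    by (metis adj_bshift_poly)
qed

lemma cq_apply: "cq y n = 1 / sqrt 2 * bshift y n"
  by (simp add: cq_def op_scale_def)

lemma ell2_cq: "y \<in> ell2 \<Longrightarrow> cq y \<in> ell2"
  unfolding cq_def op_scale_def using ell2_bshift_pow[of y 1] by (intro ell2_scaled) simp

lemma ell2_negated: "y \<in> ell2 \<Longrightarrow> (\<lambda>n. - y n) \<in> ell2"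
  using ell2_scaled[of y "-1"] by simp

lemma mmul_madj_Mmat:
  assumes "r < 4" "s < 4"
  shows "op_eq (mmul 5 (madj Mmat) Mmat r s) (Mgram r s)"
  unfolding op_eq_def
proof
  fix y :: seq
  assume "y \<in> ell2"
  with assms show "mmul 5 (madj Mmat) Mmat r s y = Mgram r s y"
    by (auto simp: less_Suc_eq numeral_eq_Suc mmul_def madj_def Mmat_def Mgram_def adj_op_negone adj_cq
        adj_op_zero op_negone_def op_scale_def op_zero_def op_one_def cq_apply fshift_def bshift_def
        ell2_negated ell2_cq fun_eq_iff split: nat.split)
qed

lemma Mmat_apply_zero: "l < 5 \<Longrightarrow> r < 4 \<Longrightarrow> Mmat l r (\<lambda>k. 0) = (\<lambda>k. 0)"
  by (auto simp: less_Suc_eq numeral_eq_Suc Mmat_def op_negone_def op_zero_def cq_apply bshift_def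
      fun_eq_iff split: nat.split)

lemma Mgram_eq_zero_iff:
  assumes "r < 4" "s < 4"
  shows "op_eq (Mgram r s) op_zero \<longleftrightarrow> (r, s) \<in> {(0, 2), (0, 3), (1, 3), (2, 0), (3, 0), (3, 1)}"
proof
  assume "op_eq (Mgram r s) op_zero"
  then have "Mgram r s (unit_seq 0) 0 = 0" "Mgram r s (unit_seq 0) 1 = 0" "Mgram r s (unit_seq 1) 0 = 0"
    by (simp_all add: op_eq_def op_zero_def)
  then show "(r, s) \<in> {(0, 2), (0, 3), (1, 3), (2, 0), (3, 0), (3, 1)}"
    using assms by (auto simp: less_Suc_eq numeral_eq_Suc Mgram_def op_scale_def op_one_def fshift_def
        bshift_def unit_seq_def)
qed (auto simp: Mgram_def op_eq_def op_zero_def)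

lemma Mgram_bshift_entries_at_0: "Mgram 1 0 y 0 = 0" "Mgram 2 3 y 0 = 0"
  by (simp_all add: Mgram_def op_scale_def bshift_def)

lemma no_sparse_lower_tri_factor_Mgram:
  assumes \<sigma>: "bij_betw \<sigma> {..<4} {..<4}"
    and "\<forall>i<4. \<forall>j<4. in_Rq (L i j)" "lower_tri 4 L" "L 0 0 (unit_seq 0) 0 \<noteq> 0"
    and "mat_eq 4 4 (mmul 4 L (madj L)) (\<lambda>i j. Mgram (\<sigma> i) (\<sigma> j))"
    and "\<forall>i<4. \<forall>j<4. op_eq (Mgram (\<sigma> i) (\<sigma> j)) op_zero \<longrightarrow> op_eq (L i j) op_zero"
  shows False
proof -
  have preimage: "\<exists>p<4. \<sigma> p = r" if "r < 4" for r
    using \<sigma> that by (metis bij_betw_imp_surj_on imageE lessThan_iff)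
  have others: "\<sigma> l < 4 \<and> \<sigma> l \<noteq> \<sigma> 0" if "0 < l" "l < 4" for l
    using bij_betw_apply[OF \<sigma>] inj_onD[OF bij_betw_imp_inj_on[OF \<sigma>], of l 0] that by auto
  have end_case: False
    if "p < 4" "\<forall>y\<in>ell2. Mgram (\<sigma> p) (\<sigma> 0) y 0 = 0" "\<not> op_eq (Mgram (\<sigma> p) (\<sigma> 0)) op_zero" for p
    using factor_first_column_vanishing_at_0[OF assms(5,2,3,4) that(1)] that(2,3) by simp
  have mid_case: False
    if "u < 4" "w < 4" "op_eq (Mgram (\<sigma> u) (\<sigma> w)) op_zero"
      "\<not> op_eq (Mgram (\<sigma> u) (\<sigma> 0)) op_zero" "\<not> op_eq (Mgram (\<sigma> w) (\<sigma> 0)) op_zero"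
      "\<forall>r<4. r \<noteq> \<sigma> 0 \<longrightarrow> op_eq (Mgram (\<sigma> u) r) op_zero \<or> op_eq (Mgram (\<sigma> w) r) op_zero" for u w
    using factor_first_column_orthogonal[OF assms(5,2,3,6) that(1-3)] that(4-6) others by blast
  have "\<sigma> 0 < 4"
    using bij_betw_apply[OF \<sigma>, of 0] by simp
  then consider "\<sigma> 0 = 0" | "\<sigma> 0 = 1" | "\<sigma> 0 = 2" | "\<sigma> 0 = 3"
    by linarith
  then show False
  proof cases
    case 1
    obtain p where "p < 4" "\<sigma> p = 1"
      using preimage[of 1] by auto
    then show False
      using end_case[of p] 1 Mgram_bshift_entries_at_0 by (simp add: Mgram_eq_zero_iff)
  next
    case 2
    obtain u w where "u < 4" "\<sigma> u = 0" "w < 4" "\<sigma> w = 2"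
      using preimage[of 0] preimage[of 2] by auto
    then show False
      using mid_case[of u w] 2 by (simp add: Mgram_eq_zero_iff eval_nat_numeral less_Suc_eq)
  next
    case 3
    obtain u w where "u < 4" "\<sigma> u = 1" "w < 4" "\<sigma> w = 3"
      using preimage[of 1] preimage[of 3] by auto
    then show False
      using mid_case[of u w] 3 by (simp add: Mgram_eq_zero_iff eval_nat_numeral less_Suc_eq)
  next
    case 4
    obtain p where "p < 4" "\<sigma> p = 2"
      using preimage[of 2] by auto
    then show False
      using end_case[of p] 4 Mgram_bshift_entries_at_0 by (simp add: Mgram_eq_zero_iff)
  qed
qed

theorem theorem3:
  fixes P :: opmat
  assumes "perm_opmat 4 P"
  shows "\<not> (\<exists>L :: opmat.
            invertible_opmat 4 L
          \<and> (\<forall>i<4. \<forall>j<4. in_Rq (L i j))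
          \<and> mat_eq 4 4 (mmul 4 L (madj L)) (mmul 5 (madj (mmul 4 Mmat P)) (mmul 4 Mmat P))
          \<and> lower_tri 4 L
          \<and> (\<forall>i<4. \<forall>j<4. op_eq (mmul 5 (madj (mmul 4 Mmat P)) (mmul 4 Mmat P) i j) op_zero
                \<longrightarrow> op_eq (L i j) op_zero))"
proof (intro notI, elim exE conjE)
  let ?G = "mmul 5 (madj (mmul 4 Mmat P)) (mmul 4 Mmat P)"
  fix L
  assume inv: "invertible_opmat 4 L" and Rq: "\<forall>i<4. \<forall>j<4. in_Rq (L i j)"
    and factor: "mat_eq 4 4 (mmul 4 L (madj L)) ?G" and tri: "lower_tri 4 L"
    and sparse: "\<forall>i<4. \<forall>j<4. op_eq (?G i j) op_zero \<longrightarrow> op_eq (L i j) op_zero"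
  obtain \<sigma> where \<sigma>: "bij_betw \<sigma> {..<4} {..<4}"
    and P: "\<forall>r<4. \<forall>j<4. P r j = (if r = \<sigma> j then op_one else op_zero)"
    using perm_opmat_columns[OF assms] by blast
  have gram: "op_eq (?G i j) (Mgram (\<sigma> i) (\<sigma> j))"
    if "i < 4" "j < 4" for i j
    using gram_mmul_perm_right[OF P \<sigma> _ that] Mmat_apply_zero mmul_madj_Mmat bij_betw_apply[OF \<sigma>] that
    by simp
  show False
  proof (rule no_sparse_lower_tri_factor_Mgram[OF \<sigma> Rq tri])
    show "L 0 0 (unit_seq 0) 0 \<noteq> 0"
      using invertible_lower_tri_const_diag[OF inv Rq tri] by simp
    show "mat_eq 4 4 (mmul 4 L (madj L)) (\<lambda>i j. Mgram (\<sigma> i) (\<sigma> j))"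
      using factor gram by (simp add: mat_eq_def op_eq_def)
    show "\<forall>i<4. \<forall>j<4. op_eq (Mgram (\<sigma> i) (\<sigma> j)) op_zero \<longrightarrow> op_eq (L i j) op_zero"
      using sparse gram by (simp add: op_eq_def)
  qed
qed

end
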